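(* Let $E$ be a simple type, $A_1,\dots,A_m,G$ subtypes of $E$, $t$ a normal $\lambda$-term, and $\alpha$ a free variable of $t$ which is not in application position in $t$ (no subterm of $t$ has the form $(\alpha)u$). Let $n\ge0$ and $p_n=\lambda x_1\dots\lambda x_n\lambda x\,x$. If $x_1:A_1,\dots,x_m:A_m\vdash_{\mathcal S} t[p_n/\alpha] : G$, then $Lg(E)\ge n$.
   Context: Simple types are built from type variables and type constants using $\rightarrow$ only; a subtype of $E$ is a subformula of $E$. $Lg(E)$ denotes the number of occurrences of $\rightarrow$ in $E$. The simply typed system $\mathcal S$ derives $\Gamma\vdash_{\mathcal S} t:A$ by: (ax) $\Gamma \vdash y : B$ for $y:B\in\Gamma$; ($\rightarrow_i$) from $\Gamma, x:B \vdash t : C$ infer $\Gamma \vdash \lambda x t : B \rightarrow C$; ($\rightarrow_e$) from $\Gamma \vdash u : B\rightarrow C$ and $\Gamma \vdash v : B$ infer $\Gamma \vdash (u)v : C$. $t[u/\alpha]$ is capture-avoiding substitution; normal means without $\beta$-redex. *)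

theory Defs
  imports Main
begin

datatype ty = TVar nat | TConst nat | Arr ty ty

text \<open>Subtype = subformula.\<close>
inductive subtype :: "ty \<Rightarrow> ty \<Rightarrow> bool" where
  sub_refl: "subtype A A"
| sub_left: "subtype A B \<Longrightarrow> subtype A (Arr B C)"
| sub_right: "subtype A C \<Longrightarrow> subtype A (Arr B C)"

fun Lg :: "ty \<Rightarrow> nat" where
  "Lg (TVar a) = 0"
| "Lg (TConst c) = 0"
| "Lg (Arr A B) = Suc (Lg A + Lg B)"

text \<open>Lambda terms with named variables; App u v stands for (u)v.\<close>
datatype trm = Var nat | App trm trm | Lam nat trm

fun FV :: "trm \<Rightarrow> nat set" where
  "FV (Var x) = {x}"
| "FV (App u v) = FV u \<union> FV v"
| "FV (Lam x s) = FV s - {x}"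

fun normal :: "trm \<Rightarrow> bool" where
  "normal (Var x) = True"
| "normal (App u v) = ((\<forall>x s. u \<noteq> Lam x s) \<and> normal u \<and> normal v)"
| "normal (Lam x s) = normal s"

fun not_app_pos :: "nat \<Rightarrow> trm \<Rightarrow> bool" where
  "not_app_pos a (Var x) = True"
| "not_app_pos a (App u v) = (u \<noteq> Var a \<and> not_app_pos a u \<and> not_app_pos a v)"
| "not_app_pos a (Lam x s) = (x = a \<or> not_app_pos a s)"

text \<open>Substitution t[p/a] of a closed term p for the free occurrences of a;
  since p is closed no capture can occur, so this is capture-avoiding substitution.\<close>
fun subst_closed :: "trm \<Rightarrow> trm \<Rightarrow> nat \<Rightarrow> trm" where
  "subst_closed (Var y) p a = (if y = a then p else Var y)"
| "subst_closed (App u v) p a = App (subst_closed u p a) (subst_closed v p a)"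
| "subst_closed (Lam x s) p a = (if x = a then Lam x s else Lam x (subst_closed s p a))"

fun pn :: "nat \<Rightarrow> trm" where
  "pn 0 = Lam 0 (Var 0)"
| "pn (Suc n) = Lam (Suc n) (pn n)"

inductive typing :: "(nat \<Rightarrow> ty option) \<Rightarrow> trm \<Rightarrow> ty \<Rightarrow> bool" where
  ax: "\<Gamma> y = Some B \<Longrightarrow> typing \<Gamma> (Var y) B"
| arr_i: "typing (\<Gamma>(x \<mapsto> B)) t C \<Longrightarrow> typing \<Gamma> (Lam x t) (Arr B C)"
| arr_e: "typing \<Gamma> u (Arr B C) \<Longrightarrow> typing \<Gamma> v B \<Longrightarrow> typing \<Gamma> (App u v) C"

end

theory Submission
  imports Defs
begin

text \<open>Subformula property: let a normal term be typed in a context whose types are subtypes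
  of \<open>E\<close>. If it is not an abstraction, its head is a context variable and its type is a
  right part of that variable's type, hence a subtype of \<open>E\<close>. Consequently, if its type is a
  subtype of \<open>E\<close> or it is not an abstraction, every subterm is typable (in an extended context)
  with a subtype of \<open>E\<close>. As \<open>\<alpha>\<close> is not in application position, \<open>t[p\<^sub>n/\<alpha>]\<close> is normal
  and contains \<open>p\<^sub>n\<close>, whose types all have at least \<open>n\<close> arrows.\<close>

inductive subterm :: "trm \<Rightarrow> trm \<Rightarrow> bool" where
  subterm_refl: "subterm s s"
| subterm_App1: "subterm s u \<Longrightarrow> subterm s (App u v)"
| subterm_App2: "subterm s v \<Longrightarrow> subterm s (App u v)"
| subterm_Lam: "subterm s b \<Longrightarrow> subterm s (Lam x b)"

inductive_cases subterm_AppE: "subterm p (App u v)"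
inductive_cases subterm_LamE: "subterm p (Lam x b)"

fun is_Lam :: "trm \<Rightarrow> bool" where
  "is_Lam (Lam x b) = True"
| "is_Lam (Var y) = False"
| "is_Lam (App u v) = False"

inductive_cases typing_VarE: "typing \<Gamma> (Var y) T"
inductive_cases typing_AppE: "typing \<Gamma> (App u v) T"
inductive_cases typing_LamE: "typing \<Gamma> (Lam x b) T"

lemma subtype_trans: "subtype B C \<Longrightarrow> subtype A B \<Longrightarrow> subtype A C"
  by (induction rule: subtype.induct) (auto intro: subtype.intros)

lemma subtype_ArrD:
  assumes "subtype (Arr B C) E"
  shows "subtype B E" "subtype C E"
  using assms by (meson subtype_trans subtype.intros)+

lemma Lg_mono_subtype: "subtype A B \<Longrightarrow> Lg A \<le> Lg B"
  by (induction rule: subtype.induct) auto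

lemma ran_fun_upd_subset: "ran (m(x \<mapsto> b)) \<subseteq> insert b (ran m)"
  by (auto simp: ran_def)

lemma normal_App_not_Lam: "normal (App u v) \<Longrightarrow> \<not> is_Lam u"
  by (cases u) auto

lemma typing_neutral_subtype:
  assumes "normal s" "typing \<Gamma> s T" "\<forall>A \<in> ran \<Gamma>. subtype A E" "\<not> is_Lam s"
  shows "subtype T E"
  using assms
proof (induction s arbitrary: T)
  case (Var y)
  then have "T \<in> ran \<Gamma>" by (auto elim: typing_VarE intro: ranI)
  with Var.prems(3) show ?case by blast
next
  case (App u v)
  from App.prems(2) obtain B where "typing \<Gamma> u (Arr B T)" by (auto elim: typing_AppE)
  with App.IH(1) App.prems normal_App_not_Lam have "subtype (Arr B T) E" by auto
  then show ?case by (rule subtype_ArrD)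
qed simp

lemma subterm_typing_subtype:
  assumes "normal s" "typing \<Gamma> s T" "\<forall>A \<in> ran \<Gamma>. subtype A E"
    and "subtype T E \<or> \<not> is_Lam s" "subterm p s"
  shows "\<exists>\<Delta> U. typing \<Delta> p U \<and> subtype U E"
  using assms
proof (induction s arbitrary: \<Gamma> T)
  case (Var y)
  then have "p = Var y" by (auto elim: subterm.cases)
  with Var.prems typing_neutral_subtype[of "Var y" \<Gamma> T E] show ?case by auto
next
  case (App u v)
  from App.prems(2) obtain B where u: "typing \<Gamma> u (Arr B T)" and v: "typing \<Gamma> v B"
    by (auto elim: typing_AppE)
  have "subtype (Arr B T) E"
    using typing_neutral_subtype[OF _ u] App.prems normal_App_not_Lam by auto
  then have "subtype B E" "subtype T E" by (rule subtype_ArrD)+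
  from App.prems(5) consider "p = App u v" | "subterm p u" | "subterm p v"
    by (auto elim: subterm_AppE)
  then show ?case
  proof cases
    case 1
    with App.prems \<open>subtype T E\<close> show ?thesis by blast
  next
    case 2
    with App.IH(1)[OF _ u App.prems(3)] App.prems(1) \<open>subtype (Arr B T) E\<close>
    show ?thesis by simp
  next
    case 3
    with App.IH(2)[OF _ v App.prems(3)] App.prems(1) \<open>subtype B E\<close> show ?thesis by simp
  qed
next
  case (Lam x b)
  from Lam.prems(4) have "subtype T E" by simp
  from Lam.prems(2) obtain B C where T: "T = Arr B C" and b: "typing (\<Gamma>(x \<mapsto> B)) b C"
    by (auto elim: typing_LamE)
  have "subtype B E" "subtype C E" using \<open>subtype T E\<close> unfolding T by (rule subtype_ArrD)+
  have ctx: "\<forall>A \<in> ran (\<Gamma>(x \<mapsto> B)). subtype A E"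
    using Lam.prems(3) \<open>subtype B E\<close> ran_fun_upd_subset[of \<Gamma> x B] by auto
  from Lam.prems(5) consider "p = Lam x b" | "subterm p b" by (auto elim: subterm_LamE)
  then show ?case
  proof cases
    case 1
    with Lam.prems(2) \<open>subtype T E\<close> show ?thesis by blast
  next
    case 2
    with Lam.IH[OF _ b ctx] Lam.prems(1) \<open>subtype C E\<close> show ?thesis by simp
  qed
qed

lemma normal_pn: "normal (pn n)"
  by (induction n) auto

lemma typing_pn_Lg: "typing \<Gamma> (pn n) T \<Longrightarrow> n \<le> Lg T"
proof (induction n arbitrary: \<Gamma> T)
  case (Suc n)
  then have "typing \<Gamma> (Lam (Suc n) (pn n)) T" by simp
  then obtain B C \<Gamma>' where "T = Arr B C" "typing \<Gamma>' (pn n) C" by (auto elim: typing_LamE)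
  with Suc.IH show ?case by fastforce
qed simp

text \<open>Substituting for a variable that never occurs in function position creates no redex.\<close>

lemma normal_subst_closed:
  "normal p \<Longrightarrow> normal t \<Longrightarrow> not_app_pos a t \<Longrightarrow> normal (subst_closed t p a)"
proof (induction t)
  case (App u v)
  then have "\<not> is_Lam (subst_closed u p a)" by (cases u) auto
  with App show ?case by (cases "subst_closed u p a") auto
qed auto

lemma subterm_subst_closed: "a \<in> FV t \<Longrightarrow> subterm p (subst_closed t p a)"
  by (induction t) (auto intro: subterm.intros)

theorem lemma2p2p6:
  fixes E G :: ty and \<Gamma> :: "nat \<Rightarrow> ty option" and t :: trm and \<alpha> n :: nat
  assumes "finite (dom \<Gamma>)"
    and "\<forall>A \<in> ran \<Gamma>. subtype A E"
    and "subtype G E"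
    and "normal t"
    and "\<alpha> \<in> FV t"
    and "not_app_pos \<alpha> t"
    and "typing \<Gamma> (subst_closed t (pn n) \<alpha>) G"
  shows "Lg E \<ge> n"
proof -
  have "normal (subst_closed t (pn n) \<alpha>)"
    using normal_subst_closed[OF normal_pn assms(4,6)] .
  moreover have "subterm (pn n) (subst_closed t (pn n) \<alpha>)"
    using subterm_subst_closed[OF assms(5)] .
  ultimately obtain \<Delta> U where "typing \<Delta> (pn n) U" "subtype U E"
    using subterm_typing_subtype assms(2,3,7) by blast
  then show ?thesis using typing_pn_Lg Lg_mono_subtype le_trans by blast
qed

end
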